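(* Let $\alpha\in(0,1]$, $\lambda_0>0$, and for $\lambda>0$ let $w_n(\lambda)$ be the coefficients of $\sum_{n\ge0}w_n(\lambda)u^n=\frac{\lambda}{\lambda+(1-u)^\alpha}(1-(1-u)^\alpha)$. Then for every $x>0$, with $h=x/n$, $$\lim_{n\to\infty}\frac1h\,w_n(\lambda_0h^\alpha)=\lambda_0x^{\alpha-1}E_{\alpha,\alpha}(-\lambda_0x^\alpha)=\frac{d}{dx}\big[1-E_\alpha(-\lambda_0x^\alpha)\big],$$ the Mittag-Leffler probability density on $(0,\infty)$, whose Laplace transform is $\lambda_0/(\lambda_0+s^\alpha)$.
   Context: $E_{\alpha,\gamma}(z)=\sum_{m\ge0}z^m/\Gamma(\alpha m+\gamma)$, $E_\alpha=E_{\alpha,1}$. *)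

theory Defs
  imports "HOL-Analysis.Analysis" "HOL-Computational_Algebra.Formal_Power_Series"
begin

definition mittag_leffler :: "real \<Rightarrow> real \<Rightarrow> real \<Rightarrow> real" where
  "mittag_leffler a g z = (\<Sum>m. z ^ m / Gamma (a * real m + g))"

definition mittag_leffler1 :: "real \<Rightarrow> real \<Rightarrow> real" where
  "mittag_leffler1 a z = mittag_leffler a 1 z"

definition one_minus_pow_fps :: "real \<Rightarrow> real fps" where
  "one_minus_pow_fps a = Abs_fps (\<lambda>k. (-1) ^ k * (a gchoose k))"

text \<open>Generating function lambda/(lambda + (1-u)^a) * (1 - (1-u)^a) as a formal power series;
  the denominator has constant term lambda + 1, which is nonzero for lambda > 0.\<close>
definition w_fps :: "real \<Rightarrow> real \<Rightarrow> real fps" where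
  "w_fps a lam = fps_const lam * (1 - one_minus_pow_fps a) / (fps_const lam + one_minus_pow_fps a)"

definition w_coeff :: "real \<Rightarrow> real \<Rightarrow> nat \<Rightarrow> real" where
  "w_coeff a lam n = fps_nth (w_fps a lam) n"

end

theory Submission
  imports Defs
begin

(*
  Expanding lambda / (lambda + Q) geometrically in Q^(-1), where Q = (1-u)^a, gives for
  lambda e^a < 1
    w_n(lambda) = sum_k (-1)^k lambda^(k+1) ([u^n] (1-u)^(-a(k+1)) - [u^n] (1-u)^(-ak)),
  and [u^n] (1-u)^(-s) = (s)_n / n!.  With lambda = c n^(-a) and c = lambda0 x^a this turns
  n w_n(lambda) into sum_k (-1)^k c^(k+1) (g_n(ak+a) - n^(-a) g_n(ak)), where
  g_n(s) = n^(1-s) (s)_n / n! tends to 1/Gamma(s) (Gauss' product formula).  For s >= 1 the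
  sequence g_n(s) decreases in n, which dominates the k-th term uniformly in n by a summable
  sequence, so Tannery's theorem lets the limit pass under the sum; the limit series is
  c E_{a,a}(-c).  The derivative formula is termwise differentiation of E_a.
*)

definition neg_binomial_coeff :: "real \<Rightarrow> nat \<Rightarrow> real" where
  "neg_binomial_coeff s n = pochhammer s n / fact n"

lemma neg_binomial_coeff_Suc:
  "neg_binomial_coeff s (Suc n) = neg_binomial_coeff s n * (s + real n) / (real n + 1)"
  by (simp add: neg_binomial_coeff_def pochhammer_Suc field_simps)

lemma neg_binomial_coeff_nonneg: "0 \<le> s \<Longrightarrow> 0 \<le> neg_binomial_coeff s n"
proof (induction n)
  case 0
  then show ?case by (simp add: neg_binomial_coeff_def)
next
  case (Suc n)
  then show ?case by (simp add: neg_binomial_coeff_Suc)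
qed

lemma neg_binomial_coeff_le_power:
  assumes "0 \<le> s"
  shows "neg_binomial_coeff s n \<le> (1 + s) ^ n"
proof (induction n)
  case 0
  then show ?case by (simp add: neg_binomial_coeff_def)
next
  case (Suc n)
  have "0 \<le> (s + real n) / (real n + 1)" "(s + real n) / (real n + 1) \<le> 1 + s"
    using assms by (simp_all add: field_simps)
  then have "neg_binomial_coeff s n * ((s + real n) / (real n + 1)) \<le> (1 + s) ^ n * (1 + s)"
    using Suc neg_binomial_coeff_nonneg[OF assms] by (intro mult_mono) auto
  then show ?case by (simp add: neg_binomial_coeff_Suc mult.commute)
qed

lemma power_le_fact_mult_exp:
  assumes "0 \<le> (y::real)"
  shows "y ^ n \<le> fact n * exp y"
proof -
  have "(\<lambda>k. y ^ k / fact k) sums exp y"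
    using exp_converges[of y] by (simp add: divide_inverse mult.commute)
  then have "sum (\<lambda>k. y ^ k / fact k) {n} \<le> exp y"
    using assms by (intro sum_le_suminf[of _ "{n}", THEN order.trans]) (auto simp: sums_iff)
  then show ?thesis by (simp add: field_simps)
qed

lemma summable_geometric_neg_binomial_coeff:
  assumes "0 \<le> q" "q * exp a < 1" "0 \<le> a" "0 \<le> t"
  shows "summable (\<lambda>k. q ^ k * neg_binomial_coeff (a * real k + t) n)"
proof (rule summable_comparison_test)
  show "summable (\<lambda>k. fact n * exp (1 + t) * (q * exp a) ^ k)"
    using assms by (intro summable_mult summable_geometric) auto
  show "\<exists>N. \<forall>k\<ge>N. norm (q ^ k * neg_binomial_coeff (a * real k + t) n)
                     \<le> fact n * exp (1 + t) * (q * exp a) ^ k"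
  proof (intro exI allI impI)
    fix k :: nat
    have s: "0 \<le> a * real k + t" using assms by simp
    have "neg_binomial_coeff (a * real k + t) n \<le> fact n * exp (1 + (a * real k + t))"
      using s by (intro order.trans[OF neg_binomial_coeff_le_power power_le_fact_mult_exp]) auto
    also have "exp (1 + (a * real k + t)) = exp (1 + t) * exp a ^ k"
      by (simp add: exp_add[symmetric] exp_of_nat_mult[symmetric] algebra_simps)
    finally have "q ^ k * neg_binomial_coeff (a * real k + t) n \<le> q ^ k * (fact n * (exp (1 + t) * exp a ^ k))"
      using assms by (intro mult_left_mono) auto
    then show "norm (q ^ k * neg_binomial_coeff (a * real k + t) n)
                 \<le> fact n * exp (1 + t) * (q * exp a) ^ k"
      using assms neg_binomial_coeff_nonneg[OF s] by (simp add: power_mult_distrib mult_ac)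
  qed
qed

lemma fps_nth_one_minus_pow_fps: "fps_nth (one_minus_pow_fps s) n = (-1) ^ n * (s gchoose n)"
  by (simp add: one_minus_pow_fps_def)

lemma fps_nth_one_minus_pow_fps_neg: "fps_nth (one_minus_pow_fps (- s)) n = neg_binomial_coeff s n"
  by (simp add: fps_nth_one_minus_pow_fps gbinomial_pochhammer neg_binomial_coeff_def
      power_mult_distrib[symmetric])

lemma one_minus_pow_fps_0: "one_minus_pow_fps 0 = 1"
  by (rule fps_ext) (case_tac n, simp_all add: fps_nth_one_minus_pow_fps)

lemma one_minus_pow_fps_add:
  "one_minus_pow_fps (s + t) = one_minus_pow_fps s * one_minus_pow_fps t"
proof (rule fps_ext)
  fix n
  have "fps_nth (one_minus_pow_fps s * one_minus_pow_fps t) n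
      = (-1) ^ n * (\<Sum>i=0..n. (s gchoose i) * (t gchoose (n - i)))"
    unfolding fps_mult_nth fps_nth_one_minus_pow_fps sum_distrib_left
    by (intro sum.cong refl) (auto simp: power_add[symmetric])
  then show "fps_nth (one_minus_pow_fps (s + t)) n = fps_nth (one_minus_pow_fps s * one_minus_pow_fps t) n"
    by (simp add: fps_nth_one_minus_pow_fps gbinomial_Vandermonde)
qed

definition w_layer_fps :: "real \<Rightarrow> nat \<Rightarrow> real fps" where
  "w_layer_fps a k = one_minus_pow_fps (- (a * real k)) - one_minus_pow_fps (a - a * real k)"

lemma w_layer_fps_0: "w_layer_fps a 0 = 1 - one_minus_pow_fps a"
  by (simp add: w_layer_fps_def one_minus_pow_fps_0)

lemma one_minus_pow_fps_mult_w_layer_fps_Suc: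
  "one_minus_pow_fps a * w_layer_fps a (Suc k) = w_layer_fps a k"
proof -
  have "- (a * real k) = a + - (a * real (Suc k))" "a - a * real k = a + (a - a * real (Suc k))"
    by (simp_all add: algebra_simps)
  then show ?thesis
    unfolding w_layer_fps_def right_diff_distrib by (simp only: one_minus_pow_fps_add)
qed

lemma fps_nth_w_layer_fps_Suc:
  "fps_nth (w_layer_fps a (Suc k)) n
     = neg_binomial_coeff (a * real k + a) n - neg_binomial_coeff (a * real k) n"
proof -
  have "- (a * real (Suc k)) = - (a * real k + a)" "a - a * real (Suc k) = - (a * real k)"
    by (simp_all add: algebra_simps)
  then show ?thesis
    by (simp only: w_layer_fps_def fps_sub_nth fps_nth_one_minus_pow_fps_neg)
qed

definition w_series :: "real \<Rightarrow> real \<Rightarrow> nat \<Rightarrow> real" where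
  "w_series a lam n = (\<Sum>k. (-1) ^ k * lam ^ (k + 1) * fps_nth (w_layer_fps a (Suc k)) n)"

lemma summable_w_series:
  assumes "0 \<le> lam" "lam * exp a < 1" "0 \<le> a"
  shows "summable (\<lambda>k. (-1) ^ k * lam ^ (k + 1) * fps_nth (w_layer_fps a (Suc k)) n)"
proof (rule summable_comparison_test)
  let ?c = "\<lambda>t k. lam * (lam ^ k * neg_binomial_coeff (a * real k + t) n)"
  show "summable (\<lambda>k. ?c a k + ?c 0 k)"
    using assms by (intro summable_add summable_mult summable_geometric_neg_binomial_coeff) auto
  show "\<exists>N. \<forall>k\<ge>N. norm ((-1) ^ k * lam ^ (k + 1) * fps_nth (w_layer_fps a (Suc k)) n)
                     \<le> ?c a k + ?c 0 k"
  proof (intro exI allI impI)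
    fix k :: nat
    let ?b = "\<lambda>t. neg_binomial_coeff (a * real k + t) n"
    have "0 \<le> ?b a" "0 \<le> ?b 0"
      using assms by (auto intro!: neg_binomial_coeff_nonneg)
    have "norm ((-1) ^ k * lam ^ (k + 1) * fps_nth (w_layer_fps a (Suc k)) n)
            = lam ^ (k + 1) * \<bar>?b a - ?b 0\<bar>"
      using assms by (simp add: fps_nth_w_layer_fps_Suc abs_mult power_abs)
    also have "\<dots> \<le> lam ^ (k + 1) * (?b a + ?b 0)"
      using \<open>0 \<le> ?b a\<close> \<open>0 \<le> ?b 0\<close> assms by (intro mult_left_mono) auto
    finally show "norm ((-1) ^ k * lam ^ (k + 1) * fps_nth (w_layer_fps a (Suc k)) n)
                 \<le> ?c a k + ?c 0 k"
      by (simp add: algebra_simps)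
  qed
qed

lemma w_series_fps_equation:
  assumes "0 \<le> lam" "lam * exp a < 1" "0 \<le> a"
  shows "(fps_const lam + one_minus_pow_fps a) * Abs_fps (w_series a lam)
           = fps_const lam * (1 - one_minus_pow_fps a)"
proof (rule fps_ext)
  fix j
  define V where "V = one_minus_pow_fps a"
  define f where "f i k = (-1) ^ k * lam ^ (k + 1) * fps_nth (w_layer_fps a (Suc k)) i" for i k
  define h where "h k = (-1) ^ k * lam ^ (k + 1) * fps_nth (w_layer_fps a k) j" for k
  have sf: "summable (f i)" for i
    unfolding f_def using assms by (rule summable_w_series)
  have W: "w_series a lam i = suminf (f i)" for i
    by (simp only: w_series_def f_def[abs_def])
  have "fps_nth (V * Abs_fps (w_series a lam)) j = (\<Sum>i=0..j. \<Sum>k. fps_nth V i * f (j - i) k)"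
    unfolding fps_mult_nth
    by (intro sum.cong refl) (simp add: W suminf_mult sf)
  also have "\<dots> = (\<Sum>k. \<Sum>i=0..j. fps_nth V i * f (j - i) k)"
    by (intro suminf_sum[symmetric] summable_mult sf)
  also have "\<dots> = suminf h"
  proof (rule suminf_cong)
    fix k
    have "(\<Sum>i=0..j. fps_nth V i * f (j - i) k)
            = (-1) ^ k * lam ^ (k + 1) * fps_nth (V * w_layer_fps a (Suc k)) j"
      by (simp add: fps_mult_nth f_def sum_distrib_left mult_ac)
    then show "(\<Sum>i=0..j. fps_nth V i * f (j - i) k) = h k"
      by (simp add: h_def V_def one_minus_pow_fps_mult_w_layer_fps_Suc)
  qed
  finally have VW: "fps_nth (V * Abs_fps (w_series a lam)) j = suminf h" .
  have "(\<lambda>k. h (Suc k)) = (\<lambda>k. - lam * f j k)"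
    by (simp add: h_def f_def mult_ac)
  then have "(\<lambda>k. h (Suc k)) sums (- lam * w_series a lam j)"
    using sums_mult[OF summable_sums[OF sf[of j]], of "- lam"] by (simp add: W)
  then have "h sums (- lam * w_series a lam j + h 0)"
    by (simp add: sums_Suc_iff)
  then have "suminf h = - lam * w_series a lam j + lam * fps_nth (1 - V) j"
    by (simp add: sums_iff h_def w_layer_fps_0 V_def)
  then show "fps_nth ((fps_const lam + V) * Abs_fps (w_series a lam)) j
               = fps_nth (fps_const lam * (1 - V)) j"
    unfolding distrib_right fps_add_nth VW by simp
qed

lemma w_coeff_eq_w_series:
  assumes "0 < lam" "lam * exp a < 1" "0 \<le> a"
  shows "w_coeff a lam n = w_series a lam n"
proof -
  define g where "g = fps_const lam + one_minus_pow_fps a"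
  have g0: "fps_nth g 0 \<noteq> 0"
    using assms by (simp add: g_def fps_nth_one_minus_pow_fps)
  have "w_fps a lam = (g * Abs_fps (w_series a lam)) * inverse g"
    using w_series_fps_equation[of lam a] assms
    by (simp add: w_fps_def g_def fps_divide_unit[OF g0[unfolded g_def]])
  also have "\<dots> = Abs_fps (w_series a lam)"
    using inverse_mult_eq_1'[OF g0] by (simp add: mult.assoc mult.commute[of g])
  finally show ?thesis by (simp add: w_coeff_def)
qed

definition rGamma_approx :: "real \<Rightarrow> nat \<Rightarrow> real" where
  "rGamma_approx s n = real n powr (1 - s) * neg_binomial_coeff s n"

lemma rGamma_approx_nonneg: "0 \<le> s \<Longrightarrow> 0 \<le> rGamma_approx s n"
  by (simp add: rGamma_approx_def neg_binomial_coeff_nonneg)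

lemma rGamma_approx_LIMSEQ: "rGamma_approx s \<longlonglongrightarrow> rGamma s"
proof -
  have "(\<lambda>n. rGamma_series s n * inverse (1 + s * inverse (real n)))
          \<longlonglongrightarrow> rGamma s * inverse (1 + s * 0)"
    by (intro tendsto_intros lim_inverse_n) auto
  moreover have "\<forall>\<^sub>F n in sequentially.
                   rGamma_series s n * inverse (1 + s * inverse (real n)) = rGamma_approx s n"
  proof -
    have "\<forall>\<^sub>F n in sequentially. \<bar>s\<bar> < real n"
      by (rule eventually_sequentiallyI[of "nat \<lceil>\<bar>s\<bar> + 1\<rceil>"]) linarith
    then show ?thesis
    proof eventually_elim
      case (elim n)
      then have n: "0 < real n" "0 < s + real n" by auto
      have "rGamma_series s n = neg_binomial_coeff s n * (s + real n) / real n powr s"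
        using n by (simp add: rGamma_series_def neg_binomial_coeff_def pochhammer_Suc powr_def)
      moreover have "inverse (1 + s * inverse (real n)) = real n / (s + real n)"
        using n by (simp add: field_simps)
      ultimately have "rGamma_series s n * inverse (1 + s * inverse (real n))
                         = real n / real n powr s * neg_binomial_coeff s n"
        using n by (simp add: field_simps)
      also have "\<dots> = rGamma_approx s n"
        using n by (simp add: rGamma_approx_def powr_diff)
      finally show ?case .
    qed
  qed
  ultimately show ?thesis
    by (simp add: Lim_transform_eventually)
qed

lemma ratio_le_powr_ratio:
  fixes m s :: real
  assumes "1 \<le> s" "1 \<le> m"
  shows "(s + m) / (m + 1) \<le> ((m + 1) / m) powr (s - 1)"
proof -
  have "1 / (m + 1) \<le> ln ((m + 1) / m)"
    using ln_le_minus_one[of "m / (m + 1)"] assms by (simp add: ln_div field_simps)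
  then have "(s - 1) * (1 / (m + 1)) \<le> (s - 1) * ln ((m + 1) / m)"
    using assms by (intro mult_left_mono) auto
  then have "exp ((s - 1) / (m + 1)) \<le> ((m + 1) / m) powr (s - 1)"
    using assms by (simp add: powr_def)
  moreover have "(s + m) / (m + 1) = 1 + (s - 1) / (m + 1)"
    using assms by (simp add: field_simps)
  ultimately show ?thesis
    using exp_ge_add_one_self[of "(s - 1) / (m + 1)"] by linarith
qed

lemma rGamma_approx_Suc_le:
  assumes "1 \<le> s" "1 \<le> n"
  shows "rGamma_approx s (Suc n) \<le> rGamma_approx s n"
proof -
  define m where "m = real n"
  define R where "R = ((m + 1) / m) powr (s - 1)"
  have m: "1 \<le> m" using assms by (simp add: m_def)
  have R: "0 < R" "(s + m) / (m + 1) \<le> R"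
    using ratio_le_powr_ratio[OF assms(1) m] m by (simp_all add: R_def)
  have "(m + 1) powr (1 - s) = m powr (1 - s) / R"
    using m by (simp add: R_def powr_divide powr_diff)
  then have "rGamma_approx s (Suc n) = m powr (1 - s) * neg_binomial_coeff s n * ((s + m) / (m + 1) / R)"
    by (simp add: rGamma_approx_def neg_binomial_coeff_Suc m_def add.commute mult_ac)
  also have "\<dots> \<le> m powr (1 - s) * neg_binomial_coeff s n * 1"
    using R m assms
    by (intro mult_left_mono mult_nonneg_nonneg neg_binomial_coeff_nonneg)
       (auto simp: divide_le_eq mult.commute)
  finally show ?thesis by (simp add: rGamma_approx_def m_def)
qed

lemma rGamma_approx_antimono:
  assumes "1 \<le> s" "1 \<le> m" "m \<le> n"
  shows "rGamma_approx s n \<le> rGamma_approx s m"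
  using assms(3)
proof (induction n rule: dec_induct)
  case (step n)
  then show ?case
    using rGamma_approx_Suc_le[OF assms(1), of n] assms(2) by linarith
qed simp

lemma rGamma_le_rGamma_approx:
  assumes "1 \<le> s" "1 \<le> n"
  shows "rGamma s \<le> rGamma_approx s n"
  using assms by (intro LIMSEQ_le_const2[OF rGamma_approx_LIMSEQ] exI[of _ n] allI impI
      rGamma_approx_antimono) auto

lemma power_mult_rGamma_approx_eq:
  assumes "1 \<le> n"
  shows "c ^ k * rGamma_approx (a * real k + t) n
           = real n powr (1 - t) * ((c * real n powr (- a)) ^ k * neg_binomial_coeff (a * real k + t) n)"
proof -
  have "(real n powr (- a)) ^ k = real n powr (- a * real k)"
    using assms by (simp add: powr_realpow[symmetric] powr_powr)
  moreover have "real n powr (1 - (a * real k + t)) = real n powr (1 - t) * real n powr (- a * real k)"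
    by (simp add: powr_add[symmetric] algebra_simps)
  ultimately show ?thesis
    by (simp add: rGamma_approx_def power_mult_distrib mult_ac)
qed

lemma summable_power_mult_rGamma_approx:
  assumes "1 \<le> n" "0 \<le> c" "c * real n powr (- a) * exp a < 1" "0 \<le> a" "0 \<le> t"
  shows "summable (\<lambda>k. c ^ k * rGamma_approx (a * real k + t) n)"
  unfolding power_mult_rGamma_approx_eq[OF assms(1)]
  using assms by (intro summable_mult summable_geometric_neg_binomial_coeff) auto

lemma eventually_powr_scaling_small:
  assumes "0 < a"
  shows "\<forall>\<^sub>F n in sequentially. 1 \<le> n \<and> c * real n powr (- a) * exp a < 1"
proof -
  have "(\<lambda>n. c * real n powr (- a) * exp a) \<longlonglongrightarrow> c * 0 * exp a"
    using assms by (intro tendsto_intros tendsto_neg_powr filterlim_real_sequentially) auto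
  then have "\<forall>\<^sub>F n in sequentially. c * real n powr (- a) * exp a < 1"
    by (rule order_tendstoD(2)) simp
  then show ?thesis
    using eventually_ge_at_top[of 1] by (auto intro: eventually_conj)
qed

lemma summable_mittag_leffler1_series:
  assumes "0 < a"
  shows "summable (\<lambda>m. rGamma (a * real m + 1) * z ^ m)"
proof -
  obtain n :: nat where n: "1 \<le> n" "\<bar>z\<bar> * real n powr (- a) * exp a < 1"
    using eventually_powr_scaling_small[OF assms, of "\<bar>z\<bar>"]
    unfolding eventually_sequentially by blast
  show ?thesis
  proof (rule summable_comparison_test[OF _ summable_power_mult_rGamma_approx[OF n(1) _ n(2)]])
    show "\<exists>N. \<forall>m\<ge>N. norm (rGamma (a * real m + 1) * z ^ m)
                     \<le> \<bar>z\<bar> ^ m * rGamma_approx (a * real m + 1) n"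
    proof (intro exI allI impI)
      fix m :: nat
      have "1 \<le> a * real m + 1"
        using assms by simp
      then have "0 \<le> rGamma (a * real m + 1)" "rGamma (a * real m + 1) \<le> rGamma_approx (a * real m + 1) n"
        using rGamma_le_rGamma_approx n(1) by (auto simp: rGamma_inverse_Gamma)
      then show "norm (rGamma (a * real m + 1) * z ^ m) \<le> \<bar>z\<bar> ^ m * rGamma_approx (a * real m + 1) n"
        by (simp add: abs_mult power_abs mult.commute mult_left_mono)
    qed
  qed (use assms in auto)
qed

lemma mittag_leffler1_has_real_derivative:
  assumes "0 < a"
  shows "(mittag_leffler1 a has_real_derivative mittag_leffler a a z / a) (at z)"
proof -
  define c where "c m = rGamma (a * real m + 1)" for m
  have sc: "summable (\<lambda>m. c m * y ^ m)" for y
    unfolding c_def using assms by (rule summable_mittag_leffler1_series)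
  have E: "mittag_leffler1 a = (\<lambda>z. \<Sum>m. c m * z ^ m)"
    by (simp add: fun_eq_iff mittag_leffler1_def mittag_leffler_def c_def rGamma_inverse_Gamma
        divide_inverse mult.commute)
  have "a * (diffs c m * z ^ m) = z ^ m / Gamma (a * real m + a)" for m
  proof -
    have "a * diffs c m = rGamma (a * real m + a)"
      using rGamma_plus1[of "a * real (Suc m)"] by (simp add: diffs_def c_def algebra_simps)
    then have "a * (diffs c m * z ^ m) = rGamma (a * real m + a) * z ^ m"
      by (simp only: mult.assoc[symmetric])
    then show ?thesis
      by (simp add: rGamma_inverse_Gamma divide_inverse mult.commute)
  qed
  then have "a * (\<Sum>m. diffs c m * z ^ m) = mittag_leffler a a z"
    unfolding mittag_leffler_def suminf_mult[OF termdiff_converges_all[OF sc, of z], symmetric]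
    by simp
  then have "(\<Sum>m. diffs c m * z ^ m) = mittag_leffler a a z / a"
    using assms by (simp add: field_simps)
  then show ?thesis
    using termdiffs_strong_converges_everywhere[OF sc, of z] by (simp only: E)
qed

definition scaled_w_term :: "real \<Rightarrow> real \<Rightarrow> nat \<Rightarrow> nat \<Rightarrow> real" where
  "scaled_w_term a c k n = (-1) ^ k * c ^ (k + 1)
     * (rGamma_approx (a * real k + a) n - real n powr (- a) * rGamma_approx (a * real k) n)"

lemma real_mult_w_series_eq:
  assumes "0 \<le> a" "0 \<le> c" "1 \<le> n" "c * real n powr (- a) * exp a < 1"
  shows "real n * w_series a (c * real n powr (- a)) n = (\<Sum>k. scaled_w_term a c k n)"
proof -
  define lam where "lam = c * real n powr (- a)"
  have "real n * w_series a lam n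
          = (\<Sum>k. real n * ((-1) ^ k * lam ^ (k + 1) * fps_nth (w_layer_fps a (Suc k)) n))"
    unfolding w_series_def
    using assms by (intro suminf_mult[symmetric] summable_w_series) (auto simp: lam_def)
  also have "\<dots> = (\<Sum>k. scaled_w_term a c k n)"
  proof (rule suminf_cong)
    fix k
    let ?P = "real n * (real n powr (- a)) ^ (k + 1)"
    have n: "0 < real n" using assms by simp
    have "(real n powr (- a)) ^ (k + 1) = (real n powr (- a)) powr real (k + 1)"
      using n by (intro powr_realpow[symmetric]) simp
    also have "\<dots> = real n powr (- a * real (k + 1))"
      by (rule powr_powr)
    finally have P1: "?P = real n powr (1 - (a * real k + a))"
      using n by (simp add: powr_mult_base algebra_simps)
    have P0: "?P = real n powr (- a) * real n powr (1 - a * real k)"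
      unfolding P1 by (simp add: powr_add[symmetric] algebra_simps)
    have "real n * ((-1) ^ k * lam ^ (k + 1) * fps_nth (w_layer_fps a (Suc k)) n)
            = (-1) ^ k * c ^ (k + 1) * (?P * neg_binomial_coeff (a * real k + a) n
                                       - ?P * neg_binomial_coeff (a * real k) n)"
      by (simp add: lam_def fps_nth_w_layer_fps_Suc power_mult_distrib algebra_simps)
    also have "\<dots> = scaled_w_term a c k n"
      unfolding scaled_w_term_def rGamma_approx_def
      by (subst (1) P1, subst P0) (simp add: mult_ac)
    finally show "real n * ((-1) ^ k * lam ^ (k + 1) * fps_nth (w_layer_fps a (Suc k)) n)
                    = scaled_w_term a c k n" .
  qed
  finally show ?thesis by (simp add: lam_def)
qed

lemma scaled_w_term_LIMSEQ:
  assumes "0 < a"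
  shows "(\<lambda>n. scaled_w_term a c k n) \<longlonglongrightarrow> (-1) ^ k * c ^ (k + 1) * rGamma (a * real k + a)"
proof -
  have "(\<lambda>n. real n powr (- a)) \<longlonglongrightarrow> 0"
    using assms by (intro tendsto_neg_powr filterlim_real_sequentially) auto
  then have "(\<lambda>n. scaled_w_term a c k n)
               \<longlonglongrightarrow> (-1) ^ k * c ^ (k + 1) * (rGamma (a * real k + a) - 0 * rGamma (a * real k))"
    unfolding scaled_w_term_def by (intro tendsto_intros rGamma_approx_LIMSEQ)
  then show ?thesis by simp
qed

lemma norm_scaled_w_term_le:
  assumes "0 < a" "0 \<le> c" "1 \<le> a * real k" "1 \<le> N" "N \<le> n"
  shows "norm (scaled_w_term a c k n)
           \<le> c ^ (k + 1) * (rGamma_approx (a * real k + a) N + rGamma_approx (a * real k) N)"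
proof -
  let ?g1 = "rGamma_approx (a * real k + a) n" and ?g0 = "rGamma_approx (a * real k) n"
  have g_le: "?g1 \<le> rGamma_approx (a * real k + a) N" "?g0 \<le> rGamma_approx (a * real k) N"
    using assms by (intro rGamma_approx_antimono; simp)+
  have g_nonneg: "0 \<le> ?g1" "0 \<le> ?g0"
    using assms by (auto intro!: rGamma_approx_nonneg)
  have "1 \<le> real n powr a"
    using assms by (intro ge_one_powr_ge_zero) auto
  then have p: "0 \<le> real n powr (- a)" "real n powr (- a) \<le> 1"
    by (auto simp: powr_minus intro: inverse_le_1_iff[THEN iffD2])
  then have "real n powr (- a) * ?g0 \<le> ?g0"
    using g_nonneg by (simp add: mult_left_le_one_le)
  then have abs_le: "\<bar>?g1 - real n powr (- a) * ?g0\<bar> \<le> ?g1 + ?g0"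
    using g_nonneg mult_nonneg_nonneg[OF p(1) g_nonneg(2)] unfolding abs_le_iff by simp
  have "norm (scaled_w_term a c k n) = c ^ (k + 1) * \<bar>?g1 - real n powr (- a) * ?g0\<bar>"
    using assms by (simp add: scaled_w_term_def abs_mult power_abs)
  also have "\<dots> \<le> c ^ (k + 1) * (rGamma_approx (a * real k + a) N + rGamma_approx (a * real k) N)"
    using abs_le g_le assms by (intro mult_left_mono) auto
  finally show ?thesis .
qed

lemma scaled_w_term_dominated:
  assumes "0 < a" "0 \<le> c"
  obtains M where "summable M"
    and "\<forall>\<^sub>F (k, n) in at_top \<times>\<^sub>F sequentially. norm (scaled_w_term a c k n) \<le> M k"
proof -
  obtain N :: nat where N: "1 \<le> N" and small: "c * real N powr (- a) * exp a < 1"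
    using eventually_powr_scaling_small[OF assms(1), of c]
    unfolding eventually_sequentially by blast
  obtain K :: nat where K: "1 / a \<le> real K"
    using real_arch_simple by blast
  define M where "M k = c ^ (k + 1) * (rGamma_approx (a * real k + a) N + rGamma_approx (a * real k) N)"
    for k
  have "summable (\<lambda>k. c * (c ^ k * rGamma_approx (a * real k + a) N
                            + c ^ k * rGamma_approx (a * real k + 0) N))"
    using assms N small by (intro summable_mult summable_add summable_power_mult_rGamma_approx) auto
  then have "summable M"
    by (simp add: M_def[abs_def] algebra_simps)
  moreover have "\<forall>\<^sub>F (k, n) in at_top \<times>\<^sub>F sequentially. norm (scaled_w_term a c k n) \<le> M k"
    unfolding eventually_prod_sequentially
  proof (intro exI[of _ "max N K"] allI impI)
    fix n k :: nat
    assume "max N K \<le> n" "max N K \<le> k"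
    have "1 \<le> a * real K"
      using K assms(1) by (simp add: field_simps)
    also have "\<dots> \<le> a * real k"
      using \<open>max N K \<le> k\<close> assms(1) by simp
    finally show "case (k, n) of (k, n) \<Rightarrow> norm (scaled_w_term a c k n) \<le> M k"
      using norm_scaled_w_term_le[of a c k N n] assms N \<open>max N K \<le> n\<close> by (simp add: M_def)
  qed
  ultimately show ?thesis
    using that by blast
qed

lemma sum_scaled_w_term_LIMSEQ:
  assumes "0 < a" "0 < c"
  shows "(\<lambda>n. \<Sum>k. scaled_w_term a c k n) \<longlonglongrightarrow> c * mittag_leffler a a (- c)"
proof -
  define B where "B k = (-1) ^ k * c ^ (k + 1) * rGamma (a * real k + a)" for k
  obtain M where "summable M"
    and "\<forall>\<^sub>F (k, n) in at_top \<times>\<^sub>F sequentially. norm (scaled_w_term a c k n) \<le> M k"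
    using scaled_w_term_dominated[OF assms(1) less_imp_le[OF assms(2)]] .
  then have "summable (\<lambda>k. norm (B k))"
    and lim: "(\<lambda>n. \<Sum>k. scaled_w_term a c k n) \<longlonglongrightarrow> suminf B"
    using tannerys_theorem[of "scaled_w_term a c" B sequentially M]
      scaled_w_term_LIMSEQ[OF assms(1)] by (auto simp: B_def)
  have B: "B = (\<lambda>k. c * ((- c) ^ k / Gamma (a * real k + a)))"
    by (simp add: fun_eq_iff B_def rGamma_inverse_Gamma power_minus[of c] divide_inverse mult_ac)
  have "summable B"
    using \<open>summable (\<lambda>k. norm (B k))\<close> by (rule summable_norm_cancel)
  then have "summable (\<lambda>k. (- c) ^ k / Gamma (a * real k + a))"
    using assms(2) unfolding B by (subst (asm) summable_cmult_iff) auto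
  then have "suminf B = c * mittag_leffler a a (- c)"
    unfolding B mittag_leffler_def by (rule suminf_mult)
  then show ?thesis
    using lim by simp
qed

lemma scaled_w_coeff_LIMSEQ:
  assumes "0 < a" "0 < lam0" "0 < x"
  shows "(\<lambda>n. (1 / (x / real n)) * w_coeff a (lam0 * (x / real n) powr a) n)
           \<longlonglongrightarrow> lam0 * x powr (a - 1) * mittag_leffler a a (- lam0 * x powr a)"
proof -
  define c where "c = lam0 * x powr a"
  have c: "0 < c"
    using assms by (simp add: c_def)
  have lim: "(\<lambda>n. (1 / x) * (\<Sum>k. scaled_w_term a c k n))
               \<longlonglongrightarrow> (1 / x) * (c * mittag_leffler a a (- c))"
    using assms(1) c by (intro tendsto_mult_left sum_scaled_w_term_LIMSEQ)
  have eq: "(1 / x) * (c * mittag_leffler a a (- c))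
              = lam0 * x powr (a - 1) * mittag_leffler a a (- lam0 * x powr a)"
    using assms by (simp add: c_def powr_diff)
  have ev: "\<forall>\<^sub>F n in sequentially. (1 / x) * (\<Sum>k. scaled_w_term a c k n)
                   = (1 / (x / real n)) * w_coeff a (lam0 * (x / real n) powr a) n"
    using eventually_powr_scaling_small[OF assms(1), of c]
  proof eventually_elim
    case (elim n)
    then have n: "1 \<le> n" and small: "c * real n powr (- a) * exp a < 1"
      by simp_all
    have "(x / real n) powr a = x powr a / real n powr a"
      using assms by (simp add: powr_divide)
    then have "lam0 * (x / real n) powr a = c * real n powr (- a)"
      by (simp add: c_def powr_minus divide_inverse)
    then have "w_coeff a (lam0 * (x / real n) powr a) n = w_series a (c * real n powr (- a)) n"
      using assms c small n by (simp add: w_coeff_eq_w_series)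
    moreover have "real n * w_series a (c * real n powr (- a)) n = (\<Sum>k. scaled_w_term a c k n)"
      using assms c small n by (intro real_mult_w_series_eq) auto
    ultimately show ?case
      by simp
  qed
  show ?thesis
    using Lim_transform_eventually[OF lim ev] unfolding eq .
qed

lemma one_minus_mittag_leffler1_has_real_derivative:
  assumes "0 < a" "0 < x"
  shows "((\<lambda>t. 1 - mittag_leffler1 a (- lam0 * t powr a)) has_real_derivative
           lam0 * x powr (a - 1) * mittag_leffler a a (- lam0 * x powr a)) (at x)"
proof -
  have inner: "((\<lambda>t. - lam0 * t powr a) has_real_derivative - lam0 * (a * x powr (a - 1))) (at x)"
    using assms(2) by (intro DERIV_cmult has_real_derivative_powr)
  have "((\<lambda>t. 1 - mittag_leffler1 a (- lam0 * t powr a)) has_real_derivative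
          0 - mittag_leffler a a (- lam0 * x powr a) / a * (- lam0 * (a * x powr (a - 1)))) (at x)"
    by (intro DERIV_diff DERIV_const DERIV_chain2[OF mittag_leffler1_has_real_derivative[OF assms(1)] inner])
  moreover have "0 - mittag_leffler a a (- lam0 * x powr a) / a * (- lam0 * (a * x powr (a - 1)))
                   = lam0 * x powr (a - 1) * mittag_leffler a a (- lam0 * x powr a)"
    using assms(1) by simp
  ultimately show ?thesis
    by simp
qed

theorem mainTheorem7:
  fixes a lam0 x :: real
  assumes "0 < a" and "a \<le> 1" and "0 < lam0" and "0 < x"
  shows "((\<lambda>n. (1 / (x / real n)) * w_coeff a (lam0 * (x / real n) powr a) n)
           \<longlonglongrightarrow> lam0 * x powr (a - 1) * mittag_leffler a a (- lam0 * x powr a))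
         \<and> (((\<lambda>t. 1 - mittag_leffler1 a (- lam0 * t powr a)) has_real_derivative
           lam0 * x powr (a - 1) * mittag_leffler a a (- lam0 * x powr a)) (at x))"
  using scaled_w_coeff_LIMSEQ[OF assms(1,3,4)]
    one_minus_mittag_leffler1_has_real_derivative[OF assms(1,4)]
  by blast

end
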